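(* Let $s\in(0,1)$, $N>2s$, $1<p<\frac{N+2s}{N-2s}$, $0<a\in L^\infty(\mathbb R^N)$, $f\in H^{-s}(\mathbb R^N)$, and $C_p:=(p\|a\|_{L^\infty})^{-\frac1{p-1}}\frac{p-1}{p}$. If $\|f\|_{H^{-s}(\mathbb R^N)}<C_pS_1^{\frac{p+1}{2(p-1)}}$, then $$\inf_{u\in H^s(\mathbb R^N),\ \|u\|_{L^{p+1}(\mathbb R^N)}=1}\Big\{C_p\|u\|_{H^s}^{\frac{2p}{p-1}}-\langle f,u\rangle\Big\}>0.$$
   Context: $\|u\|_{H^s}^2=\int_{\mathbb R^N}|u|^2+\iint_{\mathbb R^{2N}}\frac{|u(x)-u(y)|^2}{|x-y|^{N+2s}}dx\,dy$; $\langle\cdot,\cdot\rangle$ is the $H^{-s}$–$H^s$ duality; $S_1:=\inf_{u\in H^s\setminus\{0\}}\frac{\|u\|_{H^s}^2}{(\int|u|^{p+1})^{2/(p+1)}}$. *)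

theory Defs
  imports "HOL-Analysis.Analysis" "HOL-Probability.Essential_Supremum"
begin

text \<open>Functions on R^N are modelled as u :: 'n \<Rightarrow> real with 'n a Euclidean space, N = DIM('n).\<close>

definition L2_sq :: "('n::euclidean_space \<Rightarrow> real) \<Rightarrow> ennreal" where
  "L2_sq u = (\<integral>\<^sup>+ x. ennreal ((u x)\<^sup>2) \<partial>lborel)"

definition gagliardo :: "real \<Rightarrow> ('n::euclidean_space \<Rightarrow> real) \<Rightarrow> ennreal" where
  "gagliardo s u = (\<integral>\<^sup>+ x. (\<integral>\<^sup>+ y. ennreal ((u x - u y)\<^sup>2 / (norm (x - y) powr (real DIM('n) + 2 * s))) \<partial>lborel) \<partial>lborel)"

definition in_Hs :: "real \<Rightarrow> ('n::euclidean_space \<Rightarrow> real) \<Rightarrow> bool" where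
  "in_Hs s u \<longleftrightarrow> u \<in> borel_measurable lborel \<and> L2_sq u < \<infinity> \<and> gagliardo s u < \<infinity>"

definition Hs_norm :: "real \<Rightarrow> ('n::euclidean_space \<Rightarrow> real) \<Rightarrow> real" where
  "Hs_norm s u = sqrt (enn2real (L2_sq u) + enn2real (gagliardo s u))"

definition Lp_norm :: "real \<Rightarrow> ('n::euclidean_space \<Rightarrow> real) \<Rightarrow> real" where
  "Lp_norm q u = (enn2real (\<integral>\<^sup>+ x. ennreal (\<bar>u x\<bar> powr q) \<partial>lborel)) powr (1 / q)"

text \<open>H^{-s}: bounded linear functionals on H^s; duality pairing is application.\<close>
definition in_Hminus :: "real \<Rightarrow> (('n::euclidean_space \<Rightarrow> real) \<Rightarrow> real) \<Rightarrow> bool" where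
  "in_Hminus s f \<longleftrightarrow>
     (\<forall>u v. in_Hs s u \<longrightarrow> in_Hs s v \<longrightarrow> f (\<lambda>x. u x + v x) = f u + f v) \<and>
     (\<forall>c u. in_Hs s u \<longrightarrow> f (\<lambda>x. c * u x) = c * f u) \<and>
     (\<exists>C. \<forall>u. in_Hs s u \<longrightarrow> \<bar>f u\<bar> \<le> C * Hs_norm s u)"

definition Hminus_norm :: "real \<Rightarrow> (('n::euclidean_space \<Rightarrow> real) \<Rightarrow> real) \<Rightarrow> real" where
  "Hminus_norm s f = (SUP u \<in> {u. in_Hs s u \<and> Hs_norm s u \<le> 1}. \<bar>f u\<bar>)"

definition Linf_norm :: "('n::euclidean_space \<Rightarrow> real) \<Rightarrow> real" where
  "Linf_norm a = real_of_ereal (esssup lborel (\<lambda>x. ereal \<bar>a x\<bar>))"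

text \<open>S_1 (it depends on 'n through the type).\<close>
definition S1 :: "real \<Rightarrow> real \<Rightarrow> ('n::euclidean_space) itself \<Rightarrow> real" where
  "S1 s p _ = (INF u \<in> {u :: 'n \<Rightarrow> real. in_Hs s u \<and> Hs_norm s u \<noteq> 0}.
       (Hs_norm s u)\<^sup>2 / (enn2real (\<integral>\<^sup>+ x. ennreal (\<bar>u x\<bar> powr (p + 1)) \<partial>lborel)) powr (2 / (p + 1)))"

end

theory Submission
  imports Defs
begin

text \<open>Write \<open>q = 2p/(p-1)\<close>. On the unit sphere of \<open>L\<^sup>p\<^sup>+\<^sup>1\<close> the definition of \<open>S\<^sub>1\<close> gives
  \<open>\<parallel>u\<parallel> \<ge> \<surd>S\<^sub>1\<close> and duality gives \<open>\<langle>f,u\<rangle> \<le> \<parallel>f\<parallel> \<parallel>u\<parallel>\<close>, so the functional at \<open>u\<close> is at least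
  \<open>g(t) = C\<^sub>p t\<^sup>q - \<parallel>f\<parallel> t\<close> with \<open>t = \<parallel>u\<parallel> \<ge> \<surd>S\<^sub>1\<close>. The smallness hypothesis says
  \<open>C\<^sub>p t\<^sup>q\<^sup>-\<^sup>1 > \<parallel>f\<parallel>\<close> at \<open>t = \<surd>S\<^sub>1\<close>, hence \<open>g(t) \<ge> g(\<surd>S\<^sub>1) > 0\<close> for all \<open>t \<ge> \<surd>S\<^sub>1\<close>.
  The infimum is over a nonempty set because a normalised tent function \<open>max 0 (1 - \<bar>x\<bar>)\<close> lies
  in \<open>H\<^sup>s\<close>; its Gagliardo integral is controlled by summing \<open>\<bar>z\<bar>\<^sup>-\<^sup>b\<close> over dyadic shells.\<close>

lemma nn_integral_finite_if_bounded_on_shells: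
  fixes g :: "'n::euclidean_space \<Rightarrow> ennreal" and A :: "nat \<Rightarrow> 'n set"
  assumes shells_measurable [measurable]: "\<And>k. A k \<in> sets lborel"
    and shell_radius: "\<And>k. A k \<subseteq> cball 0 (R k)" "\<And>k. 0 \<le> R k"
    and shell_bound: "\<And>z. g z \<noteq> 0 \<Longrightarrow> \<exists>k. z \<in> A k \<and> g z \<le> ennreal (c k)"
    and c_nonneg: "\<And>k. 0 \<le> c k" and summable: "summable (\<lambda>k. c k * R k ^ DIM('n))"
  shows "(\<integral>\<^sup>+z. g z \<partial>lborel) < \<infinity>"
proof -
  define V where "V = unit_ball_vol (real DIM('n))"
  have V: "0 \<le> V" unfolding V_def by simp
  have "g z \<le> (\<Sum>k. ennreal (c k) * indicator (A k) z)" for z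
  proof (cases "g z = 0")
    case False
    then obtain k where "z \<in> A k" "g z \<le> ennreal (c k)" using shell_bound by blast
    then have "g z \<le> ennreal (c k) * indicator (A k) z" by simp
    also have "\<dots> \<le> (\<Sum>k. ennreal (c k) * indicator (A k) z)"
      using sum_le_suminf[OF summableI, of "{k}"] by simp
    finally show ?thesis .
  qed simp
  then have "(\<integral>\<^sup>+z. g z \<partial>lborel) \<le> (\<integral>\<^sup>+z. (\<Sum>k. ennreal (c k) * indicator (A k) z) \<partial>lborel)"
    by (intro nn_integral_mono) simp
  also have "\<dots> = (\<Sum>k. \<integral>\<^sup>+z. ennreal (c k) * indicator (A k) z \<partial>lborel)"
    by (rule nn_integral_suminf) measurable
  also have "\<dots> = (\<Sum>k. ennreal (c k) * emeasure lborel (A k))"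
    by (intro suminf_cong nn_integral_cmult_indicator shells_measurable)
  also have "\<dots> \<le> (\<Sum>k. ennreal (V * (c k * R k ^ DIM('n))))"
  proof (intro suminf_le summableI)
    fix k
    have "emeasure lborel (A k) \<le> emeasure lborel (cball (0::'n) (R k))"
      using shell_radius by (intro emeasure_mono) auto
    also have "\<dots> = ennreal (V * R k ^ DIM('n))"
      unfolding V_def using shell_radius(2) by (rule emeasure_cball)
    finally have "ennreal (c k) * emeasure lborel (A k) \<le> ennreal (c k) * ennreal (V * R k ^ DIM('n))"
      by (rule mult_left_mono) simp
    then show "ennreal (c k) * emeasure lborel (A k) \<le> ennreal (V * (c k * R k ^ DIM('n)))"
      using c_nonneg by (simp add: ennreal_mult'[symmetric] mult.left_commute)
  qed
  also have "\<dots> < \<infinity>"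
    using summable_mult[OF summable, of V] ennreal_suminf_neq_top c_nonneg V shell_radius(2)
    by (simp add: top.not_eq_extremum)
  finally show ?thesis .
qed

lemma exists_dyadic_interval:
  fixes x :: real assumes "1 \<le> x"
  obtains k :: nat where "2 powr k \<le> x" "x < 2 powr (real k + 1)"
proof
  have "real (nat \<lfloor>log 2 x\<rfloor>) = \<lfloor>log 2 x\<rfloor>" using assms by simp
  then show "2 powr (nat \<lfloor>log 2 x\<rfloor>) \<le> x" "x < 2 powr (real (nat \<lfloor>log 2 x\<rfloor>) + 1)"
    using floor_log_eq_powr_iff[of x 2 "\<lfloor>log 2 x\<rfloor>"] assms by auto
qed

lemma nn_integral_norm_powr_ball_finite:
  fixes b :: real assumes "0 \<le> b" "b < real DIM('n)"
  shows "(\<integral>\<^sup>+z. indicator (ball (0::'n::euclidean_space) 1) z * ennreal (norm z powr (-b)) \<partial>lborel) < \<infinity>"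
proof (rule nn_integral_finite_if_bounded_on_shells)
  let ?A = "\<lambda>k::nat. {z::'n. 2 powr k \<le> 1 / norm z \<and> 1 / norm z < 2 powr (real k + 1)}"
  show "?A k \<in> sets lborel" for k by measurable
  show "?A k \<subseteq> cball 0 (2 powr (- real k))" for k
  proof
    fix z assume z: "z \<in> ?A k"
    then have "0 < norm z" by (cases "z = 0") auto
    with z show "z \<in> cball 0 (2 powr (- real k))" by (simp add: powr_minus field_simps)
  qed
  fix z :: 'n
  assume "indicator (ball 0 1) z * ennreal (norm z powr (-b)) \<noteq> 0"
  then have z: "0 < norm z" "norm z < 1" by (auto simp: indicator_def)
  then obtain k :: nat where k: "2 powr k \<le> 1 / norm z" "1 / norm z < 2 powr (real k + 1)"
    using exists_dyadic_interval[of "1 / norm z"] by (auto simp: field_simps)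
  have "norm z powr (-b) = (1 / norm z) powr b"
    using z by (simp add: powr_minus_divide powr_divide)
  also have "\<dots> \<le> (2 powr (real k + 1)) powr b"
    using k assms(1) by (intro powr_mono2) auto
  finally have "norm z powr (-b) \<le> 2 powr ((real k + 1) * b)" by (simp add: powr_powr)
  with k z show "\<exists>k. z \<in> ?A k \<and>
      indicator (ball 0 1) z * ennreal (norm z powr (-b)) \<le> ennreal (2 powr ((real k + 1) * b))"
    by (intro exI[of _ k]) (simp add: ennreal_leI)
next
  have "(2::real) powr (b - real DIM('n)) < 1" using assms(2) by (simp add: powr_less_one)
  then have "summable (\<lambda>k. 2 powr b * (2 powr (b - real DIM('n))) ^ k)"
    by (intro summable_mult summable_geometric) simp
  then show "summable (\<lambda>k::nat. 2 powr ((real k + 1) * b) * (2 powr (- real k)) ^ DIM('n))"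
    by (simp add: powr_power powr_add[symmetric] algebra_simps)
qed auto

lemma nn_integral_norm_powr_outside_ball_finite:
  fixes b :: real assumes "real DIM('n) < b"
  shows "(\<integral>\<^sup>+z. indicator (- ball (0::'n::euclidean_space) 1) z * ennreal (norm z powr (-b)) \<partial>lborel) < \<infinity>"
proof (rule nn_integral_finite_if_bounded_on_shells)
  let ?A = "\<lambda>k::nat. {z::'n. 2 powr k \<le> norm z \<and> norm z < 2 powr (real k + 1)}"
  show "?A k \<in> sets lborel" for k by measurable
  show "?A k \<subseteq> cball 0 (2 powr (real k + 1))" for k by auto
  fix z :: 'n
  assume "indicator (- ball 0 1) z * ennreal (norm z powr (-b)) \<noteq> 0"
  then have z: "1 \<le> norm z" by (auto simp: indicator_def)
  then obtain k :: nat where k: "2 powr k \<le> norm z" "norm z < 2 powr (real k + 1)"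
    by (rule exists_dyadic_interval)
  then have "norm z powr (-b) \<le> (2 powr k) powr (-b)"
    using assms by (intro powr_mono2') auto
  then have "norm z powr (-b) \<le> 2 powr (- real k * b)" by (simp add: powr_powr)
  with k z show "\<exists>k. z \<in> ?A k \<and>
      indicator (- ball 0 1) z * ennreal (norm z powr (-b)) \<le> ennreal (2 powr (- real k * b))"
    by (intro exI[of _ k]) (simp add: ennreal_leI)
next
  have "(2::real) powr (real DIM('n) - b) < 1" using assms by (simp add: powr_less_one)
  then have "summable (\<lambda>k. 2 powr real DIM('n) * (2 powr (real DIM('n) - b)) ^ k)"
    by (intro summable_mult summable_geometric) simp
  then show "summable (\<lambda>k::nat. 2 powr (- real k * b) * (2 powr (real k + 1)) ^ DIM('n))"
    by (simp add: powr_power powr_add[symmetric] algebra_simps)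
qed auto

text \<open>Near the origin the majorant uses \<open>d\<^sup>2 \<le> \<bar>z\<bar> powr (1 + s)\<close> rather than \<open>d\<^sup>2 \<le> \<bar>z\<bar>\<^sup>2\<close>, which
  keeps the singularity exponent \<open>N + s - 1\<close> nonnegative also for \<open>N = 1\<close>.\<close>
definition gagliardo_majorant :: "real \<Rightarrow> 'n::euclidean_space \<Rightarrow> ennreal" where
  "gagliardo_majorant s z =
     indicator (ball 0 1) z * ennreal (norm z powr (-(real DIM('n) + s - 1)))
     + indicator (- ball 0 1) z * ennreal (norm z powr (-(real DIM('n) + 2 * s)))"

lemma ball_sets_borel [measurable]: "ball c r \<in> sets borel"
  by simp

lemma gagliardo_majorant_measurable [measurable]:
  "gagliardo_majorant s \<in> borel_measurable borel"
  unfolding gagliardo_majorant_def by measurable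

lemma nn_integral_gagliardo_majorant_finite:
  assumes "0 < s" "s < 1"
  shows "(\<integral>\<^sup>+z. gagliardo_majorant s (z::'n::euclidean_space) \<partial>lborel) < \<infinity>"
proof -
  have "0 \<le> real DIM('n) + s - 1" "real DIM('n) + s - 1 < real DIM('n)"
    using assms DIM_positive[where 'a='n] by linarith+
  from nn_integral_norm_powr_ball_finite[OF this]
    nn_integral_norm_powr_outside_ball_finite[of "real DIM('n) + 2 * s", where 'n='n] assms
  show ?thesis
    unfolding gagliardo_majorant_def by (subst nn_integral_add) (auto simp: ennreal_add_less_top)
qed

lemma gagliardo_kernel_le_majorant:
  fixes z :: "'n::euclidean_space"
  assumes "0 < s" "s < 1" and "\<bar>d\<bar> \<le> norm z" "\<bar>d\<bar> \<le> 1"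
  shows "ennreal (d\<^sup>2 / norm z powr (real DIM('n) + 2 * s)) \<le> gagliardo_majorant s z"
proof (cases "z = 0")
  case False
  define a where "a = real DIM('n) + 2 * s"
  have r: "0 < norm z" using False by simp
  show ?thesis
  proof (cases "norm z < 1")
    case True
    have "d\<^sup>2 \<le> (norm z)\<^sup>2" using assms(3) abs_le_square_iff[of d "norm z"] by simp
    also have "\<dots> = norm z powr 2" using r by (simp add: powr_realpow)
    also have "\<dots> \<le> norm z powr (1 + s)" using True r assms(2) by (intro powr_mono') auto
    finally have "d\<^sup>2 / norm z powr a \<le> norm z powr (1 + s) / norm z powr a"
      by (simp add: divide_right_mono)
    also have "\<dots> = norm z powr (-(real DIM('n) + s - 1))"
      using r by (simp add: a_def powr_diff[symmetric] algebra_simps)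
    finally show ?thesis
      using True by (simp add: gagliardo_majorant_def a_def ennreal_leI)
  next
    case False
    have "d\<^sup>2 \<le> 1" using assms(4) abs_le_square_iff[of d 1] by simp
    then have "d\<^sup>2 / norm z powr a \<le> 1 / norm z powr a" by (simp add: divide_right_mono)
    also have "\<dots> = norm z powr (-a)" by (simp add: powr_minus_divide)
    finally show ?thesis
      using False by (simp add: gagliardo_majorant_def a_def ennreal_leI)
  qed
qed simp

lemma nn_integral_reflect_translate:
  fixes g :: "'n::euclidean_space \<Rightarrow> ennreal"
  assumes [measurable]: "g \<in> borel_measurable borel"
  shows "(\<integral>\<^sup>+y. g (x - y) \<partial>lborel) = (\<integral>\<^sup>+z. g z \<partial>lborel)"
proof -
  have "distr lborel borel (\<lambda>z. x - z) = (lborel :: 'n measure)"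
    using lborel_affine[of "-1" x] by (simp add: density_1)
  then have "(\<integral>\<^sup>+z. g z \<partial>lborel) = (\<integral>\<^sup>+z. g z \<partial>distr lborel borel (\<lambda>z. x - z))"
    by simp
  also have "\<dots> = (\<integral>\<^sup>+y. g (x - y) \<partial>lborel)"
    by (subst nn_integral_distr) auto
  finally show ?thesis ..
qed

lemma gagliardo_inner_integral_far_le:
  fixes u :: "'n::euclidean_space \<Rightarrow> real"
  assumes osc: "\<And>x y. \<bar>u x - u y\<bar> \<le> 1" and supp: "\<And>x. 1 \<le> norm x \<Longrightarrow> u x = 0"
    and x: "2 \<le> norm x" and a: "0 < a"
  shows "(\<integral>\<^sup>+y. ennreal ((u x - u y)\<^sup>2 / norm (x - y) powr a) \<partial>lborel)
           \<le> ennreal (2 powr a * norm x powr (-a)) * emeasure lborel (ball (0::'n) 1)"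
proof -
  have pointwise: "ennreal ((u x - u y)\<^sup>2 / norm (x - y) powr a)
          \<le> ennreal (2 powr a * norm x powr (-a)) * indicator (ball 0 1) y" for y
  proof (cases "norm y < 1")
    case True
    have "norm x / 2 \<le> norm (x - y)" using norm_triangle_ineq2[of x y] True x by simp
    then have "(norm x / 2) powr a \<le> norm (x - y) powr a" using x a by (intro powr_mono2) auto
    moreover have "(u x - u y)\<^sup>2 \<le> 1" using osc abs_le_square_iff[of "u x - u y" 1] by simp
    moreover have "0 < (norm x / 2) powr a" using x by auto
    ultimately have "(u x - u y)\<^sup>2 / norm (x - y) powr a \<le> 1 / (norm x / 2) powr a"
      by (intro frac_le) auto
    also have "\<dots> = 2 powr a * norm x powr (-a)" by (simp add: powr_divide powr_minus_divide)
    finally show ?thesis using True by (simp add: ennreal_leI)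
  qed (use supp x in simp)
  have "(\<integral>\<^sup>+y. ennreal ((u x - u y)\<^sup>2 / norm (x - y) powr a) \<partial>lborel)
      \<le> (\<integral>\<^sup>+y. ennreal (2 powr a * norm x powr (-a)) * indicator (ball (0::'n) 1) y \<partial>lborel)"
    by (intro nn_integral_mono pointwise)
  then show ?thesis by (simp add: nn_integral_cmult_indicator)
qed

lemma gagliardo_finite_if_lipschitz_supported_in_ball:
  fixes u :: "'n::euclidean_space \<Rightarrow> real"
  assumes s: "0 < s" "s < 1"
    and lip: "\<And>x y. \<bar>u x - u y\<bar> \<le> norm (x - y)" and osc: "\<And>x y. \<bar>u x - u y\<bar> \<le> 1"
    and supp: "\<And>x. 1 \<le> norm x \<Longrightarrow> u x = 0"
  shows "gagliardo s u < \<infinity>"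
proof -
  define a where "a = real DIM('n) + 2 * s"
  define K where "K = (\<integral>\<^sup>+z. gagliardo_majorant s (z::'n) \<partial>lborel)"
  define B where "B = emeasure lborel (ball (0::'n) 1)"
  define G where "G x = K * indicator (ball 0 2) x
    + ennreal (2 powr a) * B * (indicator (- ball 0 1) x * ennreal (norm x powr (-a)))" for x :: 'n
  have "(\<integral>\<^sup>+y. ennreal ((u x - u y)\<^sup>2 / norm (x - y) powr a) \<partial>lborel) \<le> G x" for x
  proof (cases "norm x < 2")
    case True
    have "(\<integral>\<^sup>+y. ennreal ((u x - u y)\<^sup>2 / norm (x - y) powr a) \<partial>lborel)
        \<le> (\<integral>\<^sup>+y. gagliardo_majorant s (x - y) \<partial>lborel)"
      unfolding a_def by (intro nn_integral_mono gagliardo_kernel_le_majorant s lip osc)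
    also have "\<dots> = K" unfolding K_def by (simp add: nn_integral_reflect_translate)
    finally show ?thesis using True by (simp add: G_def add_increasing2)
  next
    case False
    have "0 < a" using s by (simp add: a_def add_pos_nonneg)
    then have "(\<integral>\<^sup>+y. ennreal ((u x - u y)\<^sup>2 / norm (x - y) powr a) \<partial>lborel)
        \<le> ennreal (2 powr a * norm x powr (-a)) * B"
      unfolding B_def using False by (intro gagliardo_inner_integral_far_le osc supp) auto
    also have "\<dots> \<le> G x"
      using False by (simp add: G_def indicator_def ennreal_mult mult_ac)
    finally show ?thesis .
  qed
  then have "gagliardo s u \<le> (\<integral>\<^sup>+x. G x \<partial>lborel)"
    unfolding gagliardo_def a_def by (intro nn_integral_mono) simp
  also have "\<dots> = K * emeasure lborel (ball (0::'n) 2) + ennreal (2 powr a) * B *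
      (\<integral>\<^sup>+x. indicator (- ball (0::'n) 1) x * ennreal (norm x powr (-a)) \<partial>lborel)"
    unfolding G_def by (subst nn_integral_add) (auto simp: nn_integral_cmult_indicator nn_integral_cmult)
  also have "\<dots> < \<infinity>"
    using nn_integral_gagliardo_majorant_finite[OF s, where 'n='n]
      nn_integral_norm_powr_outside_ball_finite[of a, where 'n='n] s
      emeasure_lborel_ball_finite[of "0::'n" 1] emeasure_lborel_ball_finite[of "0::'n" 2]
    by (simp add: K_def B_def a_def ennreal_add_less_top ennreal_mult_less_top)
  finally show ?thesis .
qed

abbreviation Lp_integral :: "real \<Rightarrow> ('n::euclidean_space \<Rightarrow> real) \<Rightarrow> ennreal" where
  "Lp_integral q u \<equiv> \<integral>\<^sup>+x. ennreal (\<bar>u x\<bar> powr q) \<partial>lborel"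

lemma nn_integral_le_indicator_cball_finite:
  fixes g :: "'n::euclidean_space \<Rightarrow> ennreal"
  assumes "\<And>x. g x \<le> indicator (cball 0 r) x"
  shows "(\<integral>\<^sup>+x. g x \<partial>lborel) < \<infinity>"
proof -
  have "(\<integral>\<^sup>+x. g x \<partial>lborel) \<le> (\<integral>\<^sup>+x. indicator (cball (0::'n) r) x \<partial>lborel)"
    using assms by (intro nn_integral_mono) simp
  also have "\<dots> < \<infinity>" using emeasure_lborel_cball_finite by simp
  finally show ?thesis .
qed

lemma in_Hs_if_lipschitz_supported_in_ball:
  fixes u :: "'n::euclidean_space \<Rightarrow> real"
  assumes s: "0 < s" "s < 1" and meas: "u \<in> borel_measurable lborel"
    and lip: "\<And>x y. \<bar>u x - u y\<bar> \<le> norm (x - y)" and osc: "\<And>x y. \<bar>u x - u y\<bar> \<le> 1"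
    and supp: "\<And>x. 1 \<le> norm x \<Longrightarrow> u x = 0"
  shows "in_Hs s u"
proof -
  obtain e :: 'n where e: "norm e = 1" using vector_choose_size[of 1] by auto
  have "ennreal ((u x)\<^sup>2) \<le> indicator (cball 0 1) x" for x
  proof (cases "norm x \<le> 1")
    case True
    have "\<bar>u x\<bar> \<le> 1" using osc[of x e] supp[of e] e by simp
    then show ?thesis using True abs_le_square_iff[of "u x" 1] by simp
  qed (simp add: supp)
  then have "L2_sq u < \<infinity>"
    unfolding L2_sq_def by (rule nn_integral_le_indicator_cball_finite)
  then show ?thesis
    unfolding in_Hs_def
    using meas gagliardo_finite_if_lipschitz_supported_in_ball[OF s lip osc supp] by simp
qed

lemma L2_sq_scale:
  assumes [measurable]: "u \<in> borel_measurable borel"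
  shows "L2_sq (\<lambda>x. c * u x) = ennreal (c\<^sup>2) * L2_sq u"
  unfolding L2_sq_def
  by (simp add: nn_integral_cmult[symmetric] ennreal_mult[symmetric] power_mult_distrib)

lemma gagliardo_scale:
  assumes [measurable]: "u \<in> borel_measurable borel"
  shows "gagliardo s (\<lambda>x. c * u x) = ennreal (c\<^sup>2) * gagliardo s u"
proof -
  have "ennreal ((c * u x - c * u y)\<^sup>2 / r) = ennreal (c\<^sup>2) * ennreal ((u x - u y)\<^sup>2 / r)"
    if "0 \<le> r" for x y and r :: real
    using that by (simp add: ennreal_mult[symmetric] right_diff_distrib[symmetric] power_mult_distrib)
  then show ?thesis
    unfolding gagliardo_def by (simp add: nn_integral_cmult)
qed

lemma
  fixes u :: "'n::euclidean_space \<Rightarrow> real"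
  assumes "in_Hs s u"
  shows in_Hs_scale: "in_Hs s (\<lambda>x. c * u x)"
    and Hs_norm_scale: "Hs_norm s (\<lambda>x. c * u x) = \<bar>c\<bar> * Hs_norm s u"
proof -
  have [measurable]: "u \<in> borel_measurable borel" and "L2_sq u < \<infinity>" "gagliardo s u < \<infinity>"
    using assms unfolding in_Hs_def by auto
  then show "in_Hs s (\<lambda>x. c * u x)"
    unfolding in_Hs_def by (simp add: L2_sq_scale gagliardo_scale ennreal_mult_less_top)
  have "Hs_norm s (\<lambda>x. c * u x) = sqrt (c\<^sup>2 * (enn2real (L2_sq u) + enn2real (gagliardo s u)))"
    unfolding Hs_norm_def by (simp add: L2_sq_scale gagliardo_scale enn2real_mult distrib_left)
  then show "Hs_norm s (\<lambda>x. c * u x) = \<bar>c\<bar> * Hs_norm s u"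
    unfolding Hs_norm_def by (simp add: real_sqrt_mult)
qed

lemma Lp_integral_scale:
  fixes u :: "'n::euclidean_space \<Rightarrow> real"
  assumes [measurable]: "u \<in> borel_measurable borel"
  shows "Lp_integral q (\<lambda>x. c * u x) = ennreal (\<bar>c\<bar> powr q) * Lp_integral q u"
  by (simp add: nn_integral_cmult[symmetric] ennreal_mult[symmetric] abs_mult powr_mult)

definition tent :: "'n::euclidean_space \<Rightarrow> real" where
  "tent x = max 0 (1 - norm x)"

lemma tent_nonneg_le_1: "0 \<le> tent x" "tent x \<le> 1"
  by (auto simp: tent_def)

lemma tent_in_Hs:
  assumes "0 < s" "s < 1"
  shows "in_Hs s (tent :: 'n::euclidean_space \<Rightarrow> real)"
proof (rule in_Hs_if_lipschitz_supported_in_ball[OF assms])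
  show "tent \<in> borel_measurable lborel" unfolding tent_def by measurable
  show "\<bar>tent x - tent y\<bar> \<le> norm (x - y)" for x y :: 'n
    using norm_triangle_ineq3[of x y] by (auto simp: tent_def max_def)
  show "\<bar>tent x - tent y\<bar> \<le> 1" for x y :: 'n
    using tent_nonneg_le_1[of x] tent_nonneg_le_1[of y] by (simp add: abs_le_iff)
qed (auto simp: tent_def)

lemma Lp_integral_tent:
  assumes "0 < q"
  shows "0 < Lp_integral q (tent :: 'n::euclidean_space \<Rightarrow> real)"
    and "Lp_integral q (tent :: 'n \<Rightarrow> real) < \<infinity>"
proof -
  have "ennreal (\<bar>tent x\<bar> powr q) \<le> indicator (cball 0 1) x" for x :: 'n
  proof (cases "norm x \<le> 1")
    case True
    then show ?thesis using assms powr_mono2[of q "tent x" 1] tent_nonneg_le_1[of x] by simp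
  qed (simp add: tent_def)
  then show "Lp_integral q (tent :: 'n \<Rightarrow> real) < \<infinity>"
    by (rule nn_integral_le_indicator_cball_finite)
  have "0 < ennreal ((1/2) powr q) * emeasure lborel (cball (0::'n) (1/2))"
    by (simp add: emeasure_cball ennreal_zero_less_mult_iff)
  also have "\<dots> = (\<integral>\<^sup>+x. ennreal ((1/2) powr q) * indicator (cball (0::'n) (1/2)) x \<partial>lborel)"
    by (simp add: nn_integral_cmult_indicator)
  also have "\<dots> \<le> Lp_integral q (tent :: 'n \<Rightarrow> real)"
  proof (intro nn_integral_mono)
    fix x :: 'n
    show "ennreal ((1/2) powr q) * indicator (cball 0 (1/2)) x \<le> ennreal (\<bar>tent x\<bar> powr q)"
    proof (cases "norm x \<le> 1/2")
      case True
      then have "(1/2) powr q \<le> \<bar>tent x\<bar> powr q" using assms by (intro powr_mono2) (auto simp: tent_def)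
      then show ?thesis using True by (simp add: ennreal_leI)
    qed simp
  qed
  finally show "0 < Lp_integral q (tent :: 'n \<Rightarrow> real)" .
qed

lemma exists_Hs_Lp_norm_eq_1:
  assumes "0 < s" "s < 1" "0 < q"
  shows "\<exists>w :: 'n::euclidean_space \<Rightarrow> real. in_Hs s w \<and> Lp_norm q w = 1"
proof -
  define i where "i = enn2real (Lp_integral q (tent :: 'n \<Rightarrow> real))"
  have i: "0 < i" "Lp_integral q (tent :: 'n \<Rightarrow> real) = ennreal i"
    using Lp_integral_tent[OF assms(3), where 'n='n] by (auto simp: i_def enn2real_positive_iff)
  define w where "w x = i powr (-1 / q) * tent x" for x :: 'n
  have "Lp_integral q w = ennreal (\<bar>i powr (-1 / q)\<bar> powr q) * ennreal i"
    unfolding w_def i(2)[symmetric] by (rule Lp_integral_scale) (simp add: tent_def)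
  also have "\<dots> = 1"
  proof -
    have "(i powr (-1 / q)) powr q = inverse i"
      unfolding powr_powr using i(1) assms(3) by (simp add: powr_minus)
    then show ?thesis using i(1) by (simp add: ennreal_mult[symmetric])
  qed
  finally have "Lp_norm q w = 1" unfolding Lp_norm_def by simp
  moreover have "in_Hs s w" unfolding w_def by (intro in_Hs_scale tent_in_Hs assms)
  ultimately show ?thesis by blast
qed

lemma enn2real_Lp_integral_eq_1:
  assumes "Lp_norm q u = 1" "q \<noteq> 0"
  shows "enn2real (Lp_integral q u) = 1"
proof -
  define J where "J = enn2real (Lp_integral q u)"
  have J: "J powr (1 / q) = 1" using assms(1) unfolding Lp_norm_def J_def .
  moreover have "0 \<le> J" unfolding J_def by simp
  ultimately have "0 < J" by (cases "J = 0") auto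
  then have "J = (J powr (1 / q)) powr q" using assms(2) by (simp add: powr_powr)
  with J show ?thesis unfolding J_def by simp
qed

lemma Hs_norm_pos_if_Lp_norm_eq_1:
  assumes "in_Hs s u" "Lp_norm q u = 1" "q \<noteq> 0"
  shows "0 < Hs_norm s u"
proof (rule ccontr)
  have [measurable]: "u \<in> borel_measurable borel" using assms(1) by (simp add: in_Hs_def)
  assume "\<not> 0 < Hs_norm s u"
  moreover have "0 \<le> enn2real (L2_sq u) + enn2real (gagliardo s u)" by simp
  ultimately have "enn2real (L2_sq u) + enn2real (gagliardo s u) = 0" by (simp add: Hs_norm_def)
  then have "L2_sq u = 0"
    using assms(1) by (auto simp: add_nonneg_eq_0_iff enn2real_eq_0_iff in_Hs_def)
  then have "AE x in lborel. u x = 0"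
    unfolding L2_sq_def by (subst (asm) nn_integral_0_iff_AE) auto
  then have "Lp_integral q u = 0"
    by (subst nn_integral_0_iff_AE) (auto elim: eventually_mono)
  then show False using enn2real_Lp_integral_eq_1[OF assms(2,3)] by simp
qed

lemma S1_le_Hs_norm_sq:
  fixes u :: "'n::euclidean_space \<Rightarrow> real"
  assumes "in_Hs s u" "Lp_norm (p + 1) u = 1" "p + 1 \<noteq> 0"
  shows "S1 s p TYPE('n) \<le> (Hs_norm s u)\<^sup>2"
proof -
  let ?Q = "\<lambda>u :: 'n \<Rightarrow> real. (Hs_norm s u)\<^sup>2 / enn2real (Lp_integral (p + 1) u) powr (2 / (p + 1))"
  have "bdd_below (?Q ` {u. in_Hs s u \<and> Hs_norm s u \<noteq> 0})"
    by (intro bdd_belowI[of _ 0]) auto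
  moreover have "u \<in> {u. in_Hs s u \<and> Hs_norm s u \<noteq> 0}"
    using assms Hs_norm_pos_if_Lp_norm_eq_1[OF assms] by simp
  ultimately have "S1 s p TYPE('n) \<le> ?Q u" unfolding S1_def by (rule cINF_lower)
  also have "?Q u = (Hs_norm s u)\<^sup>2" using enn2real_Lp_integral_eq_1[OF assms(2,3)] by simp
  finally show ?thesis .
qed

lemma S1_nonneg:
  assumes "0 < s" "s < 1"
  shows "0 \<le> S1 s p TYPE('n::euclidean_space)"
proof -
  obtain w :: "'n \<Rightarrow> real" where "in_Hs s w" "Lp_norm 2 w = 1"
    using exists_Hs_Lp_norm_eq_1[OF assms, of 2] by auto
  then have "0 < Hs_norm s w" by (rule Hs_norm_pos_if_Lp_norm_eq_1) simp
  with \<open>in_Hs s w\<close> show ?thesis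
    unfolding S1_def by (intro cINF_greatest) auto
qed

lemma Hs_norm_nonneg: "0 \<le> Hs_norm s u"
  by (simp add: Hs_norm_def)

lemma in_Hs_zero: "in_Hs s (\<lambda>_. 0)" and Hs_norm_zero: "Hs_norm s (\<lambda>_. 0) = 0"
  by (simp_all add: in_Hs_def Hs_norm_def L2_sq_def gagliardo_def)

lemma bdd_above_Hminus:
  assumes "in_Hminus s f"
  shows "bdd_above ((\<lambda>u. \<bar>f u\<bar>) ` {u. in_Hs s u \<and> Hs_norm s u \<le> 1})"
proof -
  obtain C where C: "\<And>u. in_Hs s u \<Longrightarrow> \<bar>f u\<bar> \<le> C * Hs_norm s u"
    using assms unfolding in_Hminus_def by blast
  have "\<bar>f u\<bar> \<le> max C 0" if "in_Hs s u" "Hs_norm s u \<le> 1" for u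
  proof -
    have "C * Hs_norm s u \<le> max C 0"
      using that(2) Hs_norm_nonneg[of s u]
      by (cases "0 \<le> C") (auto intro: mult_left_le simp: mult_nonpos_nonneg)
    then show ?thesis using C[OF that(1)] by linarith
  qed
  then show ?thesis by (intro bdd_aboveI[of _ "max C 0"]) auto
qed

lemma Hminus_norm_nonneg:
  assumes "in_Hminus s f"
  shows "0 \<le> Hminus_norm s f"
proof -
  have "\<bar>f (\<lambda>_. 0)\<bar> \<le> Hminus_norm s f"
    unfolding Hminus_norm_def
    by (intro cSUP_upper bdd_above_Hminus assms) (simp add: in_Hs_zero Hs_norm_zero)
  then show ?thesis by linarith
qed

lemma abs_le_Hminus_norm_mult_Hs_norm:
  assumes f: "in_Hminus s f" and u: "in_Hs s u"
  shows "\<bar>f u\<bar> \<le> Hminus_norm s f * Hs_norm s u"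
proof (cases "Hs_norm s u = 0")
  case True
  obtain C where "\<And>u. in_Hs s u \<Longrightarrow> \<bar>f u\<bar> \<le> C * Hs_norm s u"
    using f unfolding in_Hminus_def by blast
  with u True show ?thesis by fastforce
next
  case False
  define t where "t = Hs_norm s u"
  have t: "0 < t" using False Hs_norm_nonneg[of s u] by (simp add: t_def)
  have "f (\<lambda>x. (1 / t) * u x) = (1 / t) * f u"
    using f u unfolding in_Hminus_def by blast
  moreover have "\<bar>f (\<lambda>x. (1 / t) * u x)\<bar> \<le> Hminus_norm s f"
    unfolding Hminus_norm_def using in_Hs_scale[OF u, of "1 / t"] Hs_norm_scale[OF u, of "1 / t"] t
    by (intro cSUP_upper bdd_above_Hminus f) (simp add: t_def)
  ultimately show ?thesis using t by (simp add: t_def divide_le_eq mult.commute)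
qed

lemma powr_minus_linear_mono:
  fixes C F q t0 t :: real
  assumes "0 \<le> C" "1 \<le> q" "0 < t0" "F \<le> C * t0 powr (q - 1)" "t0 \<le> t"
  shows "C * t0 powr q - F * t0 \<le> C * t powr q - F * t"
proof -
  have "t0 powr q = t0 * t0 powr (q - 1)" "t powr q = t * t powr (q - 1)"
    using assms by (simp_all add: powr_diff)
  moreover have "t0 powr (q - 1) \<le> t powr (q - 1)" using assms by (intro powr_mono2) auto
  then have "C * (t * t0 powr (q - 1)) \<le> C * (t * t powr (q - 1))"
    using assms by (intro mult_left_mono) auto
  moreover have "0 \<le> (C * t0 powr (q - 1) - F) * (t - t0)" using assms by simp
  ultimately show ?thesis by (simp add: algebra_simps)
qed

lemma INF_powr_minus_linear_pos:
  fixes N \<phi> :: "'a \<Rightarrow> real"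
  assumes "U \<noteq> {}" "0 < C" "1 < q" "0 < t0" "F < C * t0 powr (q - 1)"
    and "\<And>u. u \<in> U \<Longrightarrow> t0 \<le> N u" "\<And>u. u \<in> U \<Longrightarrow> \<phi> u \<le> F * N u"
  shows "0 < (INF u\<in>U. C * N u powr q - \<phi> u)"
proof -
  have "0 < t0 * (C * t0 powr (q - 1) - F)" using assms by simp
  also have "\<dots> = C * t0 powr q - F * t0"
    using assms by (simp add: powr_diff algebra_simps)
  also have "\<dots> \<le> (INF u\<in>U. C * N u powr q - \<phi> u)"
  proof (intro cINF_greatest \<open>U \<noteq> {}\<close>)
    fix u assume "u \<in> U"
    then have "C * t0 powr q - F * t0 \<le> C * N u powr q - F * N u"
      using assms by (intro powr_minus_linear_mono) auto
    then show "C * t0 powr q - F * t0 \<le> C * N u powr q - \<phi> u"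
      using assms(7)[OF \<open>u \<in> U\<close>] by linarith
  qed
  finally show ?thesis .
qed

theorem lemma3p5:
  fixes s p :: real and a :: "'n::euclidean_space \<Rightarrow> real" and f :: "('n \<Rightarrow> real) \<Rightarrow> real"
  assumes "0 < s" "s < 1"
    and "real DIM('n) > 2 * s"
    and "1 < p" "p < (real DIM('n) + 2 * s) / (real DIM('n) - 2 * s)"
    and "a \<in> borel_measurable lborel" "AE x in lborel. a x > 0"
    and "esssup lborel (\<lambda>x. ereal \<bar>a x\<bar>) < \<infinity>"
    and "in_Hminus s f"
    and "Hminus_norm s f < (p * Linf_norm a) powr (- 1 / (p - 1)) * (p - 1) / p
                             * S1 s p TYPE('n) powr ((p + 1) / (2 * (p - 1)))"
  shows "(INF u \<in> {u. in_Hs s u \<and> Lp_norm (p + 1) u = 1}.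
            (p * Linf_norm a) powr (- 1 / (p - 1)) * (p - 1) / p * Hs_norm s u powr (2 * p / (p - 1)) - f u) > 0"
proof -
  define C where "C = (p * Linf_norm a) powr (- 1 / (p - 1)) * (p - 1) / p"
  define S where "S = S1 s p TYPE('n)"
  define F where "F = Hminus_norm s f"
  define U where "U = {u :: 'n \<Rightarrow> real. in_Hs s u \<and> Lp_norm (p + 1) u = 1}"
  have small_f: "F < C * S powr ((p + 1) / (2 * (p - 1)))"
    using assms(10) by (simp add: C_def S_def F_def)
  moreover have "0 \<le> F" "0 \<le> S" "0 \<le> C"
    using Hminus_norm_nonneg[OF assms(9)] S1_nonneg[OF assms(1,2)] assms(4)
    by (simp_all add: F_def S_def C_def)
  ultimately have "0 < C" "0 < S" by (auto simp: less_le)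
  have "(INF u \<in> U. C * Hs_norm s u powr (2 * p / (p - 1)) - f u) > 0"
  proof (rule INF_powr_minus_linear_pos)
    show "U \<noteq> {}"
      unfolding U_def using exists_Hs_Lp_norm_eq_1[OF assms(1,2), of "p + 1"] assms(4) by auto
    have "sqrt S powr (2 * p / (p - 1) - 1) = S powr ((p + 1) / (2 * (p - 1)))"
      using \<open>0 < S\<close> assms(4) by (simp add: powr_half_sqrt[symmetric] powr_powr field_simps)
    then show "F < C * sqrt S powr (2 * p / (p - 1) - 1)" using small_f by simp
    show "1 < 2 * p / (p - 1)" using assms(4) by (simp add: field_simps)
  next
    fix u assume u: "u \<in> U"
    then have "S \<le> (Hs_norm s u)\<^sup>2"
      unfolding S_def U_def using assms(4) by (intro S1_le_Hs_norm_sq) auto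
    then show "sqrt S \<le> Hs_norm s u"
      using Hs_norm_nonneg real_le_lsqrt by blast
    show "f u \<le> F * Hs_norm s u"
      using abs_le_Hminus_norm_mult_Hs_norm[OF assms(9)] u by (force simp: F_def U_def)
  qed (use \<open>0 < C\<close> \<open>0 < S\<close> in auto)
  then show ?thesis by (simp add: C_def U_def)
qed

end
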